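(* $R_{2/2,3}=1+\sqrt3$. Every element of $\Pi_{2/2,3}$ can be written as \[ \psi_a(z)=\frac{\left(\frac13+\frac a2\right)z^2+(a+1)z+1}{\left(-\frac a2-\frac16\right)z^2+az+1},\qquad a\in\mathbb{R}. \] The value $1+\sqrt3$ is attained by $a=-1+\frac{1}{\sqrt3}$, and $R(\psi_a)<1+\sqrt3$ for all $a\ne -1+\frac1{\sqrt3}$.
   Context: A real rational function $\psi$ is always considered in lowest terms, as a smooth function on $\mathbb{R}$ minus its finitely many poles. It is absolutely monotonic at $x\in\mathbb{R}$ if $x$ is not a pole and $\psi^{(k)}(x)\ge 0$ for all integers $k\ge 0$. The radius of absolute monotonicity is $R(\psi)=\sup\big(\{r\in[0,\infty): \psi \text{ is absolutely monotonic at each point of } [-r,0]\}\cup\{0\}\big)\in[0,+\infty]$. For $m,n,p\in\mathbb{N}$, $\Pi_{m/n,p}$ denotes the set of rational functions $\psi=P/Q$ with $P,Q$ real polynomials, $\deg P\le m$, $Q\not\equiv 0$, $\deg Q\le n$, such that $\psi(z)-e^z=O(z^{p+1})$ as $z\to 0$. Finally, $R_{m/n,p}=\sup\{R(\psi):\psi\in\Pi_{m/n,p}\}$. *)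

theory Defs
  imports "HOL-Analysis.Analysis" "HOL-Computational_Algebra.Polynomial"
    "HOL-Computational_Algebra.Computational_Algebra" "HOL-Computational_Algebra.Field_as_Ring" "HOL-Library.Landau_Symbols"
    "HOL-Library.Extended_Real"
begin

text \<open>A real rational function is represented by a pair (P, Q) of real polynomials,
  Q nonzero; it is always taken in lowest terms (P and Q divided by their gcd).\<close>

definition rnum :: "real poly \<Rightarrow> real poly \<Rightarrow> real poly" where
  "rnum P Q = P div gcd P Q"

definition rden :: "real poly \<Rightarrow> real poly \<Rightarrow> real poly" where
  "rden P Q = Q div gcd P Q"

definition ratfun :: "real poly \<Rightarrow> real poly \<Rightarrow> real \<Rightarrow> real" where
  "ratfun P Q x = poly (rnum P Q) x / poly (rden P Q) x"

definition is_pole :: "real poly \<Rightarrow> real poly \<Rightarrow> real \<Rightarrow> bool" where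
  "is_pole P Q x \<longleftrightarrow> poly (rden P Q) x = 0"

definition abs_monotonic_at :: "real poly \<Rightarrow> real poly \<Rightarrow> real \<Rightarrow> bool" where
  "abs_monotonic_at P Q x \<longleftrightarrow>
     \<not> is_pole P Q x \<and> (\<forall>k::nat. (deriv ^^ k) (ratfun P Q) x \<ge> 0)"

definition radius_am :: "real poly \<Rightarrow> real poly \<Rightarrow> ereal" where
  "radius_am P Q = Sup ({ereal r | r. r \<ge> 0 \<and> (\<forall>x\<in>{-r..0}. abs_monotonic_at P Q x)} \<union> {0})"

definition Pi_set :: "nat \<Rightarrow> nat \<Rightarrow> nat \<Rightarrow> (real poly \<times> real poly) set" where
  "Pi_set m n p = {(P, Q). degree P \<le> m \<and> Q \<noteq> 0 \<and> degree Q \<le> n \<and>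
      (\<lambda>z. ratfun P Q z - exp z) \<in> O[at 0](\<lambda>z. z ^ (p + 1))}"

definition R_opt :: "nat \<Rightarrow> nat \<Rightarrow> nat \<Rightarrow> ereal" where
  "R_opt m n p = Sup ((\<lambda>(P, Q). radius_am P Q) ` Pi_set m n p)"

definition psi_num :: "real \<Rightarrow> real poly" where
  "psi_num a = [:1, a + 1, 1/3 + a/2:]"

definition psi_den :: "real \<Rightarrow> real poly" where
  "psi_den a = [:1, a, - a/2 - 1/6:]"

end

theory Submission
  imports Defs "HOL-Real_Asymp.Real_Asymp"
begin

text \<open>Matching \<open>exp\<close> at \<open>0\<close> to order three leaves, after normalising the denominator to
  \<open>Q 0 = 1\<close>, exactly the one-parameter family \<open>\<psi>\<^sub>a\<close>. For \<open>a = -1 + 1/\<surd>3\<close> the denominator is a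
  perfect square, \<open>(12 + 6\<surd>3) Q z = (3 + \<surd>3 - z)\<^sup>2\<close>, and the partial fraction expansion
  \<open>\<psi> = c + \<alpha>/(r - z) + \<beta>/(r - z)\<^sup>2\<close> with \<open>\<alpha> < 0 < \<beta>\<close> shows that all derivatives are
  nonnegative exactly for \<open>z \<ge> -(1 + \<surd>3)\<close>. Every other parameter fails somewhere in
  \<open>(-(1 + \<surd>3), 0]\<close>: for \<open>a < -1\<close> the function itself becomes negative, if
  \<open>Q (-(1 + \<surd>3)) < 0\<close> there is a pole, for \<open>-1 \<le> a < -1 + 1/\<surd>3\<close> the Taylor coefficients at
  \<open>0\<close> satisfy a two-term recurrence with non-real characteristic roots and hence change sign,
  and in the remaining case the first derivative is negative just to the right of
  \<open>-(1 + \<surd>3)\<close>.\<close>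

section \<open>Rational functions in lowest terms\<close>

lemma rnum_mult_gcd: "rnum P Q * gcd P Q = P"
  and rden_mult_gcd: "rden P Q * gcd P Q = Q"
  unfolding rnum_def rden_def by simp_all

lemma coprime_rnum_rden: "Q \<noteq> 0 \<Longrightarrow> coprime (rnum P Q) (rden P Q)"
  unfolding rnum_def rden_def by (rule div_gcd_coprime) simp

lemma ratfun_eq_divide:
  assumes "poly Q x \<noteq> 0"
  shows "ratfun P Q x = poly P x / poly Q x"
proof -
  have Q: "poly Q x = poly (rden P Q) x * poly (gcd P Q) x"
    by (metis poly_mult rden_mult_gcd)
  with assms have "poly (gcd P Q) x \<noteq> 0"
    by auto
  moreover have "poly P x = poly (rnum P Q) x * poly (gcd P Q) x"
    by (metis poly_mult rnum_mult_gcd)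
  ultimately show ?thesis
    unfolding ratfun_def Q by simp
qed

lemma is_pole_iff_poly_eq_0:
  assumes "poly P x \<noteq> 0 \<or> poly Q x \<noteq> 0"
  shows "is_pole P Q x \<longleftrightarrow> poly Q x = 0"
proof -
  have "poly P x = poly (rnum P Q) x * poly (gcd P Q) x"
    "poly Q x = poly (rden P Q) x * poly (gcd P Q) x"
    by (metis poly_mult rnum_mult_gcd) (metis poly_mult rden_mult_gcd)
  with assms show ?thesis
    unfolding is_pole_def by auto
qed

lemma coprime_cross_eq_imp_smult:
  fixes r1 s1 r2 s2 :: "real poly"
  assumes "coprime r1 s1" "coprime r2 s2" "s1 \<noteq> 0" "s2 \<noteq> 0" "r1 * s2 = r2 * s1"
  obtains c where "c \<noteq> 0" "r1 = smult c r2" "s1 = smult c s2"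
proof -
  have "s1 dvd r1 * s2" "s2 dvd r2 * s1"
    using assms(5) by (metis dvd_triv_right)+
  then have "s1 dvd s2" "s2 dvd s1"
    using assms(1,2) by (meson coprime_commute coprime_dvd_mult_right_iff)+
  then obtain k l where k: "s2 = s1 * k" and l: "s1 = s2 * l"
    by (meson dvdE)
  then have "s1 * (k * l) = s1 * 1"
    by (simp add: mult.assoc[symmetric])
  then have "k * l = 1"
    using mult_left_cancel[OF assms(3)] by blast
  then have "is_unit l"
    by (metis dvd_triv_right)
  then obtain c where "l = monom c 0" "c \<noteq> 0"
    by (rule is_unit_polyE')
  then have c: "c \<noteq> 0" "s1 = smult c s2"
    using l by (simp_all add: monom_0)
  moreover have "r1 * s2 = smult c r2 * s2"
    using assms(5) c by simp
  then have "r1 = smult c r2"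
    using assms(4) by (metis mult_right_cancel)
  ultimately show ?thesis
    using that by blast
qed

lemma ratfun_cong:
  assumes "Q1 \<noteq> 0" "Q2 \<noteq> 0" "P1 * Q2 = P2 * Q1"
  shows "ratfun P1 Q1 = ratfun P2 Q2" "is_pole P1 Q1 = is_pole P2 Q2"
proof -
  define r1 s1 r2 s2 where "r1 = rnum P1 Q1" "s1 = rden P1 Q1" "r2 = rnum P2 Q2" "s2 = rden P2 Q2"
  have "(r1 * s2) * (gcd P1 Q1 * gcd P2 Q2) = (r1 * gcd P1 Q1) * (s2 * gcd P2 Q2)"
    by (simp only: ac_simps)
  also have "\<dots> = P2 * Q1"
    unfolding r1_s1_r2_s2_def rnum_mult_gcd rden_mult_gcd by (rule assms(3))
  also have "\<dots> = (r2 * gcd P2 Q2) * (s1 * gcd P1 Q1)"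
    unfolding r1_s1_r2_s2_def rnum_mult_gcd rden_mult_gcd ..
  also have "\<dots> = (r2 * s1) * (gcd P1 Q1 * gcd P2 Q2)"
    by (simp only: ac_simps)
  finally have "r1 * s2 = r2 * s1"
    using assms(1,2) by (metis gcd_eq_0_iff mult_eq_0_iff mult_right_cancel)
  moreover have "s1 \<noteq> 0" "s2 \<noteq> 0"
    using assms rden_mult_gcd unfolding r1_s1_r2_s2_def by (metis mult_zero_left)+
  moreover have "coprime r1 s1" "coprime r2 s2"
    using assms coprime_rnum_rden unfolding r1_s1_r2_s2_def by auto
  ultimately obtain c where "c \<noteq> 0" "r1 = smult c r2" "s1 = smult c s2"
    using coprime_cross_eq_imp_smult by metis
  then show "ratfun P1 Q1 = ratfun P2 Q2" "is_pole P1 Q1 = is_pole P2 Q2"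
    unfolding ratfun_def is_pole_def r1_s1_r2_s2_def[symmetric] by (simp_all add: fun_eq_iff)
qed

lemma degree_rnum_le: "degree (rnum P Q) \<le> degree P"
proof (cases "P = 0")
  case False
  then show ?thesis
    using rnum_mult_gcd[of P Q] by (metis dvd_imp_degree_le dvd_triv_left)
qed (simp add: rnum_def)

lemma degree_rden_le: "degree (rden P Q) \<le> degree Q"
proof (cases "Q = 0")
  case False
  then show ?thesis
    using rden_mult_gcd[of P Q] by (metis dvd_imp_degree_le dvd_triv_left)
qed (simp add: rden_def)

section \<open>The radius of absolute monotonicity\<close>

lemma radius_am_cong:
  assumes "Q1 \<noteq> 0" "Q2 \<noteq> 0" "P1 * Q2 = P2 * Q1"
  shows "radius_am P1 Q1 = radius_am P2 Q2"
  using ratfun_cong[OF assms] unfolding radius_am_def abs_monotonic_at_def by simp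

lemma not_abs_monotonic_atI:
  "(deriv ^^ k) (ratfun P Q) x < 0 \<Longrightarrow> \<not> abs_monotonic_at P Q x"
  unfolding abs_monotonic_at_def by (meson not_le)

lemma radius_am_less:
  assumes "- R < x" "x \<le> 0" "\<not> abs_monotonic_at P Q x"
  shows "radius_am P Q < ereal R"
proof -
  have "radius_am P Q \<le> ereal (- x)"
    unfolding radius_am_def
  proof (rule Sup_least)
    fix y assume "y \<in> {ereal r |r. 0 \<le> r \<and> (\<forall>x\<in>{- r..0}. abs_monotonic_at P Q x)} \<union> {0}"
    then consider "y = 0" | r where "y = ereal r" "\<forall>x\<in>{- r..0}. abs_monotonic_at P Q x"
      by blast
    then show "y \<le> ereal (- x)"
    proof cases
      case 2
      with assms have "x \<notin> {-r..0}" by blast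
      with 2 assms show ?thesis by simp
    qed (use assms in \<open>simp add: zero_ereal_def\<close>)
  qed
  also have "\<dots> < ereal R"
    using assms by simp
  finally show ?thesis .
qed

lemma radius_am_less_at_right:
  assumes "R > 0" "eventually (\<lambda>x. \<not> abs_monotonic_at P Q x) (at_right (- R))"
  shows "radius_am P Q < ereal R"
proof -
  have "eventually (\<lambda>x. x < 0) (at_right (- R))"
    using assms(1) by (intro order_tendstoD(2)[OF tendsto_ident_at]) simp
  then have "eventually (\<lambda>x. - R < x \<and> x \<le> 0 \<and> \<not> abs_monotonic_at P Q x) (at_right (- R))"
    using assms(2) eventually_at_right_less by eventually_elim auto
  then obtain x where "- R < x" "x \<le> 0" "\<not> abs_monotonic_at P Q x"
    using eventually_happens' trivial_limit_at_right_real by blast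
  then show ?thesis
    by (rule radius_am_less)
qed

lemma radius_am_eqI:
  assumes "R \<ge> 0" "\<And>x. - R \<le> x \<Longrightarrow> x \<le> 0 \<Longrightarrow> abs_monotonic_at P Q x"
    "\<And>x. x < - R \<Longrightarrow> \<not> abs_monotonic_at P Q x"
  shows "radius_am P Q = ereal R"
  unfolding radius_am_def
proof (rule antisym)
  show "ereal R \<le> Sup ({ereal r |r. 0 \<le> r \<and> (\<forall>x\<in>{- r..0}. abs_monotonic_at P Q x)} \<union> {0})"
    using assms(1,2) by (intro Sup_upper) auto
  show "Sup ({ereal r |r. 0 \<le> r \<and> (\<forall>x\<in>{- r..0}. abs_monotonic_at P Q x)} \<union> {0}) \<le> ereal R"
  proof (rule Sup_least)
    fix y assume "y \<in> {ereal r |r. 0 \<le> r \<and> (\<forall>x\<in>{- r..0}. abs_monotonic_at P Q x)} \<union> {0}"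
    then consider "y = 0" | r where "y = ereal r" "0 \<le> r" "\<forall>x\<in>{- r..0}. abs_monotonic_at P Q x"
      by blast
    then show "y \<le> ereal R"
    proof cases
      case 2
      then have "abs_monotonic_at P Q (- r)"
        by simp
      with assms(3) have "r \<le> R"
        by force
      with 2 show ?thesis by simp
    qed (use assms in \<open>simp add: zero_ereal_def\<close>)
  qed
qed

section \<open>Higher derivatives of rational functions\<close>

lemma higher_pderiv_eq_0:
  assumes "degree p < n"
  shows "(pderiv ^^ n) p = 0"
proof (rule poly_eqI)
  fix i
  have "coeff p (i + n) = 0"
    using assms by (intro coeff_eq_0) simp
  then show "coeff ((pderiv ^^ n) p) i = coeff 0 i"
    by (simp add: coeff_higher_pderiv)
qed

lemma higher_deriv_eqI:
  fixes f :: "real \<Rightarrow> real" and F :: "nat \<Rightarrow> real \<Rightarrow> real"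
  assumes "open S" "z \<in> S"
    and "\<And>y. y \<in> S \<Longrightarrow> f y = F 0 y"
    and "\<And>k y. y \<in> S \<Longrightarrow> (F k has_real_derivative F (Suc k) y) (at y)"
  shows "(deriv ^^ k) f z = F k z"
  using assms(2)
proof (induction k arbitrary: z)
  case 0
  then show ?case using assms(3) by simp
next
  case (Suc k)
  have "((deriv ^^ k) f has_real_derivative F (Suc k) z) (at z)"
    using has_field_derivative_transform_within_open[OF assms(4) assms(1)] Suc by simp
  then show ?case
    by (simp add: DERIV_imp_deriv)
qed

lemma DERIV_poly_divide_power:
  assumes "poly Q y \<noteq> 0"
  shows "((\<lambda>y. poly p y / poly Q y ^ n) has_real_derivative
          (poly (pderiv p) y * poly Q y - of_nat n * poly p y * poly (pderiv Q) y) / poly Q y ^ Suc n) (at y)"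
proof (rule DERIV_cong[OF DERIV_divide[OF poly_DERIV DERIV_power[OF poly_DERIV]]])
  show "poly Q y ^ n \<noteq> 0"
    using assms by simp
  have "poly Q y ^ n = poly Q y * poly Q y ^ (n - Suc 0)" if "n > 0"
    using that by (simp add: power_eq_if)
  then show "(poly (pderiv p) y * poly Q y ^ n - poly p y * (of_nat n * (poly (pderiv Q) y * poly Q y ^ (n - Suc 0))))
        / (poly Q y ^ n * poly Q y ^ n) = (poly (pderiv p) y * poly Q y - of_nat n * poly p y * poly (pderiv Q) y) / poly Q y ^ Suc n"
    using assms by (cases "n = 0") (simp_all add: field_simps)
qed

fun ratfun_deriv_num :: "real poly \<Rightarrow> real poly \<Rightarrow> nat \<Rightarrow> real poly" where
  "ratfun_deriv_num P Q 0 = P"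
| "ratfun_deriv_num P Q (Suc k) =
     pderiv (ratfun_deriv_num P Q k) * Q - smult (of_nat (Suc k)) (ratfun_deriv_num P Q k * pderiv Q)"

lemma DERIV_ratfun_deriv_num:
  assumes "poly Q y \<noteq> 0"
  shows "((\<lambda>y. poly (ratfun_deriv_num P Q k) y / poly Q y ^ Suc k) has_real_derivative
           poly (ratfun_deriv_num P Q (Suc k)) y / poly Q y ^ Suc (Suc k)) (at y)"
  using DERIV_poly_divide_power[OF assms, of "ratfun_deriv_num P Q k" "Suc k"]
  by (simp only: ratfun_deriv_num.simps poly_diff poly_mult poly_smult mult.assoc)

lemma open_poly_neq_0: "open {y. poly Q y \<noteq> (0::real)}"
  by (intro open_Collect_neq continuous_intros)

lemma higher_deriv_ratfun:
  assumes "poly Q z \<noteq> 0"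
  shows "(deriv ^^ k) (ratfun P Q) z = poly (ratfun_deriv_num P Q k) z / poly Q z ^ Suc k"
  using open_poly_neq_0 _ _ DERIV_ratfun_deriv_num
  by (rule higher_deriv_eqI) (use assms in \<open>auto simp: ratfun_eq_divide\<close>)

lemma DERIV_higher_deriv_ratfun:
  assumes "poly Q z \<noteq> 0"
  shows "((deriv ^^ k) (ratfun P Q) has_real_derivative (deriv ^^ Suc k) (ratfun P Q) z) (at z)"
proof (rule has_field_derivative_transform_within_open[OF _ open_poly_neq_0])
  show "((\<lambda>y. poly (ratfun_deriv_num P Q k) y / poly Q y ^ Suc k) has_real_derivative
      (deriv ^^ Suc k) (ratfun P Q) z) (at z)"
    unfolding higher_deriv_ratfun[OF assms, of "Suc k"] by (rule DERIV_ratfun_deriv_num[OF assms])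
qed (use assms higher_deriv_ratfun in auto)

lemma ratfun_deriv_num_1: "ratfun_deriv_num P Q 1 = pderiv P * Q - P * pderiv Q"
  using ratfun_deriv_num.simps(2)[of P Q 0] by simp

text \<open>Leibniz's rule for the \<open>n\<close>-th derivative of \<open>poly Q * f\<close> when \<open>degree Q \<le> 2\<close>;
  for \<open>n < 2\<close> the terms with truncated indices \<open>n - 1\<close>, \<open>n - 2\<close> have coefficient \<open>0\<close>.\<close>
definition leibniz_quadratic :: "real poly \<Rightarrow> (nat \<Rightarrow> real \<Rightarrow> real) \<Rightarrow> nat \<Rightarrow> real \<Rightarrow> real" where
  "leibniz_quadratic Q f n y = poly Q y * f n y + real n * (poly (pderiv Q) y * f (n - 1) y)
     + real n * (real n - 1) / 2 * (poly (pderiv (pderiv Q)) y * f (n - 2) y)"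

text \<open>Differentiating the \<open>n\<close>-th expansion, where the third derivative of \<open>Q\<close> vanishes,
  and regrouping gives the \<open>(n + 1)\<close>-st:\<close>
lemma leibniz_quadratic_step:
  fixes a b d :: real and g :: "nat \<Rightarrow> real"
  defines "c \<equiv> \<lambda>n. real n * (real n - 1) / 2"
  shows "(b * g n + g (Suc n) * a) + real n * (d * g (n - 1) + g (Suc (n - 1)) * b)
      + c n * (0 * g (n - 2) + g (Suc (n - 2)) * d)
      = a * g (Suc n) + real (Suc n) * (b * g (Suc n - 1)) + c (Suc n) * (d * g (Suc n - 2))"
proof -
  consider "n = 0" | "n = 1" | m where "n = Suc (Suc m)"
    by (metis One_nat_def not0_implies_Suc)
  then show ?thesis
    by cases (simp_all add: c_def field_simps)
qed

lemma DERIV_leibniz_quadratic: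
  assumes "degree Q \<le> 2" "\<And>k. (f k has_real_derivative f (Suc k) y) (at y)"
  shows "(leibniz_quadratic Q f n has_real_derivative leibniz_quadratic Q f (Suc n) y) (at y)"
proof -
  have Q3: "pderiv (pderiv (pderiv Q)) = 0"
    using higher_pderiv_eq_0[of Q 3] assms(1) by (simp add: numeral_3_eq_3)
  have "(leibniz_quadratic Q f n has_real_derivative
      (poly (pderiv Q) y * f n y + f (Suc n) y * poly Q y)
      + real n * (poly (pderiv (pderiv Q)) y * f (n - 1) y + f (Suc (n - 1)) y * poly (pderiv Q) y)
      + real n * (real n - 1) / 2 * (poly (pderiv (pderiv (pderiv Q))) y * f (n - 2) y
               + f (Suc (n - 2)) y * poly (pderiv (pderiv Q)) y)) (at y)"
    (is "(_ has_real_derivative ?D) _")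
    unfolding leibniz_quadratic_def[abs_def]
    by (rule DERIV_add[OF DERIV_add[OF DERIV_mult[OF poly_DERIV[of Q y] assms(2)[of n]]
        DERIV_cmult[OF DERIV_mult[OF poly_DERIV[of "pderiv Q" y] assms(2)[of "n - 1"]]]]
        DERIV_cmult[OF DERIV_mult[OF poly_DERIV[of "pderiv (pderiv Q)" y] assms(2)[of "n - 2"]]]])
  moreover have "?D = leibniz_quadratic Q f (Suc n) y"
    unfolding leibniz_quadratic_def Q3 poly_0
    by (rule leibniz_quadratic_step[where a = "poly Q y" and b = "poly (pderiv Q) y"
        and d = "poly (pderiv (pderiv Q)) y" and g = "\<lambda>k. f k y"])
  ultimately show ?thesis
    by simp
qed

lemma leibniz_quadratic_eq_higher_pderiv:
  assumes "open S" "degree Q \<le> 2"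
    and "\<And>y. y \<in> S \<Longrightarrow> poly Q y * f 0 y = poly P y"
    and "\<And>k y. y \<in> S \<Longrightarrow> (f k has_real_derivative f (Suc k) y) (at y)"
    and "z \<in> S"
  shows "leibniz_quadratic Q f n z = poly ((pderiv ^^ n) P) z"
  using assms(5)
proof (induction n arbitrary: z)
  case 0
  then show ?case
    by (simp add: leibniz_quadratic_def assms(3))
next
  case (Suc n)
  have "(poly ((pderiv ^^ n) P) has_real_derivative leibniz_quadratic Q f (Suc n) z) (at z)"
    using DERIV_leibniz_quadratic[where f = f and y = z and n = n, OF assms(2) assms(4)[OF Suc.prems]]
      assms(1) Suc.prems
    by (rule has_field_derivative_transform_within_open) (rule Suc.IH)
  moreover have "(poly ((pderiv ^^ n) P) has_real_derivative poly ((pderiv ^^ Suc n) P) z) (at z)"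
    using poly_DERIV[of "(pderiv ^^ n) P" z] by simp
  ultimately show ?case
    by (rule DERIV_unique)
qed

lemma pderiv_pderiv_eq_const:
  assumes "degree p \<le> 2"
  shows "pderiv (pderiv p) = [:2 * coeff p 2:]"
proof (rule poly_eqI)
  fix n
  have "coeff p (n + 2) = 0" if "n > 0"
    using assms that by (intro coeff_eq_0) simp
  then show "coeff (pderiv (pderiv p)) n = coeff [:2 * coeff p 2:] n"
    by (cases n) (simp_all add: coeff_pderiv numeral_2_eq_2)
qed

lemma ratfun_taylor_coeff_recurrence:
  fixes P Q :: "real poly" and z :: real
  defines "c \<equiv> \<lambda>k. (deriv ^^ k) (ratfun P Q) z / fact k"
  assumes "degree P \<le> 2" "degree Q \<le> 2" "poly Q z \<noteq> 0"
  shows "poly Q z * c (k + 3) + poly (pderiv Q) z * c (k + 2) + coeff Q 2 * c (k + 1) = 0"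
proof -
  define F :: real where "F = fact (k + 1)"
  define f where "f j = (deriv ^^ j) (ratfun P Q) z" for j
  have F: "F > 0"
    unfolding F_def by simp
  have "(pderiv ^^ (k + 3)) P = 0"
    using assms(2) by (intro higher_pderiv_eq_0) simp
  moreover have "leibniz_quadratic Q (\<lambda>k. (deriv ^^ k) (ratfun P Q)) (k + 3) z = poly ((pderiv ^^ (k + 3)) P) z"
    by (rule leibniz_quadratic_eq_higher_pderiv[where S = "{y. poly Q y \<noteq> 0}"])
      (use assms(3,4) in \<open>auto simp: open_poly_neq_0 ratfun_eq_divide DERIV_higher_deriv_ratfun simp del: funpow.simps\<close>)
  ultimately have eq: "poly Q z * f (k + 3) + real (k + 3) * (poly (pderiv Q) z * f (k + 2))
      + real (k + 3) * (real (k + 3) - 1) / 2 * (2 * coeff Q 2 * f (k + 1)) = 0"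
    unfolding leibniz_quadratic_def pderiv_pderiv_eq_const[OF assms(3)] f_def
    by (simp add: numeral_3_eq_3)
  have "fact (k + 2) = (real k + 2) * F" "fact (k + 3) = (real k + 3) * ((real k + 2) * F)"
    unfolding F_def by (simp_all add: numeral_eq_Suc algebra_simps)
  moreover have "f j = fact j * c j" for j
    unfolding f_def c_def by simp
  ultimately have "f (k + 1) = F * c (k + 1)" "f (k + 2) = (real k + 2) * F * c (k + 2)"
    "f (k + 3) = (real k + 3) * (real k + 2) * F * c (k + 3)"
    by (simp_all add: F_def)
  with eq have "((real k + 3) * (real k + 2) * F)
      * (poly Q z * c (k + 3) + poly (pderiv Q) z * c (k + 2) + coeff Q 2 * c (k + 1)) = 0"
    by (simp add: field_simps)
  then show ?thesis
    using F by simp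
qed

lemma DERIV_const_divide_power:
  fixes r c z :: real
  assumes "z \<noteq> r"
  shows "((\<lambda>z. c / (r - z) ^ n) has_real_derivative of_nat n * c / (r - z) ^ Suc n) (at z)"
proof -
  have "poly [:r, -1:] z \<noteq> 0"
    using assms by simp
  from DERIV_poly_divide_power[OF this, of "[:c:]" n] show ?thesis
    by (simp add: pderiv_pCons)
qed

lemma higher_deriv_partial_fractions:
  fixes f :: "real \<Rightarrow> real"
  assumes "z < r" "\<And>y. y < r \<Longrightarrow> f y = c + \<alpha> / (r - y) + \<beta> / (r - y)\<^sup>2"
  shows "(deriv ^^ Suc k) f z = fact (Suc k) * (\<alpha> * (r - z) + \<beta> * (k + 2)) / (r - z) ^ (k + 3)"
proof -
  define F where "F k y = (if k = 0 then c else 0) + \<alpha> * fact k / (r - y) ^ (k + 1)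
    + \<beta> * fact (k + 1) / (r - y) ^ (k + 2)" for k y
  have "(deriv ^^ Suc k) f z = F (Suc k) z"
  proof (rule higher_deriv_eqI[where S = "{..<r}"])
    fix k and y assume "y \<in> {..<r}"
    then have "y \<noteq> r"
      by simp
    show "(F k has_real_derivative F (Suc k) y) (at y)"
      unfolding F_def
      by (rule DERIV_cong[OF DERIV_add[OF DERIV_add[OF DERIV_const
          DERIV_const_divide_power[OF \<open>y \<noteq> r\<close>]] DERIV_const_divide_power[OF \<open>y \<noteq> r\<close>]]])
        (simp add: algebra_simps)
  qed (use assms in \<open>auto simp: F_def power2_eq_square\<close>)
  also have "\<dots> = \<alpha> * fact (Suc k) / (r - z) ^ (k + 2)
      + \<beta> * ((k + 2) * fact (Suc k)) / ((r - z) ^ (k + 2) * (r - z))"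
    unfolding F_def by (simp add: algebra_simps)
  also have "\<dots> = fact (Suc k) * (\<alpha> * (r - z) + \<beta> * (k + 2)) / ((r - z) ^ (k + 2) * (r - z))"
    using assms(1) by (simp add: field_simps del: power_Suc)
  also have "(r - z) ^ (k + 2) * (r - z) = (r - z) ^ (k + 3)"
    by (simp add: numeral_3_eq_3 numeral_2_eq_2 mult.commute)
  finally show ?thesis .
qed

section \<open>Lucas sequences\<close>

fun lucas_U :: "real \<Rightarrow> real \<Rightarrow> nat \<Rightarrow> real" where
  "lucas_U P Q 0 = 0"
| "lucas_U P Q (Suc 0) = 1"
| "lucas_U P Q (Suc (Suc n)) = P * lucas_U P Q (Suc n) - Q * lucas_U P Q n"

lemma lucas_U_sin:
  assumes "P\<^sup>2 < 4 * Q"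
  defines "\<rho> \<equiv> sqrt Q" and "\<theta> \<equiv> arccos (P / (2 * sqrt Q))"
  shows "0 < \<theta>" "\<theta> < pi" "\<rho> > 0" "lucas_U P Q n * (\<rho> * sin \<theta>) = \<rho> ^ n * sin (n * \<theta>)"
proof -
  have "Q > 0"
    using assms(1) zero_le_power2[of P] by linarith
  then have \<rho>: "\<rho> > 0" and \<rho>\<rho>: "\<rho> * \<rho> = Q"
    unfolding \<rho>_def by simp_all
  then show "\<rho> > 0"
    by simp
  have "P\<^sup>2 < (2 * \<rho>)\<^sup>2"
    using assms(1) \<rho>\<rho> by (simp add: power2_eq_square)
  then have "\<bar>P\<bar> < 2 * \<rho>"
    using \<rho> power2_less_imp_less[of "\<bar>P\<bar>" "2 * \<rho>"] by simp
  then have bounds: "-1 < P / (2 * \<rho>)" "P / (2 * \<rho>) < 1"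
    using \<rho> by (auto simp: divide_simps abs_less_iff)
  then show "0 < \<theta>" "\<theta> < pi"
    unfolding \<theta>_def \<rho>_def[symmetric] using arccos_lt_bounded by auto
  have P: "P = 2 * \<rho> * cos \<theta>"
    using bounds \<rho> unfolding \<theta>_def \<rho>_def[symmetric] by simp
  have sin_rec: "sin (Suc (Suc n) * \<theta>) = 2 * cos \<theta> * sin (Suc n * \<theta>) - sin (n * \<theta>)" for n
    using sin_add[of "Suc n * \<theta>" \<theta>] sin_diff[of "Suc n * \<theta>" \<theta>]
    by (simp add: algebra_simps)
  have "lucas_U P Q n * (\<rho> * sin \<theta>) = \<rho> ^ n * sin (n * \<theta>) \<and>
        lucas_U P Q (Suc n) * (\<rho> * sin \<theta>) = \<rho> ^ Suc n * sin (Suc n * \<theta>)"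
  proof (induction n)
    case (Suc n)
    have step: "P * (\<rho> ^ Suc n * s1) - Q * (\<rho> ^ n * s0) = \<rho> ^ Suc (Suc n) * (2 * cos \<theta> * s1 - s0)"
      for s0 s1
      unfolding P \<rho>\<rho>[symmetric] by (simp add: algebra_simps)
    have "lucas_U P Q (Suc (Suc n)) * (\<rho> * sin \<theta>)
        = P * (lucas_U P Q (Suc n) * (\<rho> * sin \<theta>)) - Q * (lucas_U P Q n * (\<rho> * sin \<theta>))"
      by (simp add: algebra_simps)
    also have "\<dots> = P * (\<rho> ^ Suc n * sin (Suc n * \<theta>)) - Q * (\<rho> ^ n * sin (n * \<theta>))"
      by (simp only: Suc.IH[THEN conjunct1] Suc.IH[THEN conjunct2])
    also have "\<dots> = \<rho> ^ Suc (Suc n) * sin (Suc (Suc n) * \<theta>)"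
      unfolding step sin_rec ..
    finally show ?case
      using Suc.IH by simp
  qed simp
  then show "lucas_U P Q n * (\<rho> * sin \<theta>) = \<rho> ^ n * sin (n * \<theta>)"
    by simp
qed

lemma lucas_U_nonpos:
  assumes "P\<^sup>2 < 4 * Q"
  obtains j where "lucas_U P Q j \<le> 0" "j \<ge> 1"
proof -
  define \<rho> \<theta> where "\<rho> = sqrt Q" and "\<theta> = arccos (P / (2 * sqrt Q))"
  note closed = lucas_U_sin[OF assms, folded \<theta>_def, folded \<rho>_def]
  define j where "j = nat \<lceil>pi / \<theta>\<rceil>"
  have "pi / \<theta> > 1"
    using closed by simp
  then have j: "pi / \<theta> \<le> j" "j < pi / \<theta> + 1"
    unfolding j_def by linarith+
  then have "pi \<le> j * \<theta>" "j * \<theta> < pi + \<theta>"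
    using closed by (simp_all add: field_simps)
  then have "sin (j * \<theta>) \<le> 0"
    using closed by (intro sin_le_zero) auto
  then have "lucas_U P Q j * (\<rho> * sin \<theta>) \<le> 0"
    using closed by (simp add: mult_nonneg_nonpos)
  moreover have "\<rho> * sin \<theta> > 0"
    using closed by (simp add: sin_gt_zero)
  ultimately have "lucas_U P Q j \<le> 0"
    by (meson mult_pos_pos not_le)
  moreover have "j \<ge> 1"
    using j \<open>pi / \<theta> > 1\<close> by linarith
  ultimately show ?thesis
    using that by blast
qed

lemma linear_recurrence_lucas_U:
  fixes v :: "nat \<Rightarrow> real"
  assumes "\<And>j. v (j + 2) = P * v (j + 1) - Q * v j"
  shows "v (Suc n) = lucas_U P Q (Suc n) * v 1 - Q * lucas_U P Q n * v 0"
proof -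
  have "v (Suc n) = lucas_U P Q (Suc n) * v 1 - Q * lucas_U P Q n * v 0 \<and>
        v (Suc (Suc n)) = lucas_U P Q (Suc (Suc n)) * v 1 - Q * lucas_U P Q (Suc n) * v 0"
  proof (induction n)
    case 0
    show ?case
      using assms[of 0] by simp
  next
    case (Suc n)
    have "v (Suc (Suc (Suc n))) = P * v (Suc (Suc n)) - Q * v (Suc n)"
      using assms[of "Suc n"] by simp
    also have "\<dots> = (P * lucas_U P Q (Suc (Suc n)) - Q * lucas_U P Q (Suc n)) * v 1
        - Q * (P * lucas_U P Q (Suc n) - Q * lucas_U P Q n) * v 0"
      unfolding Suc.IH[THEN conjunct1] Suc.IH[THEN conjunct2] by (simp add: algebra_simps)
    finally show ?case
      using Suc.IH by simp
  qed
  then show ?thesis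
    by simp
qed

text \<open>At the first sign change of \<open>lucas_U P Q\<close> the expansion of \<open>v\<close> from
  \<open>linear_recurrence_lucas_U\<close> is negative.\<close>
lemma linear_recurrence_neg:
  fixes v :: "nat \<Rightarrow> real"
  assumes rec: "\<And>j. v (j + 2) = P * v (j + 1) - Q * v j"
    and disc: "P\<^sup>2 < 4 * Q" and "v 0 > 0"
  obtains j where "v j < 0"
proof (rule ccontr)
  assume "\<not> thesis"
  with that have nonneg: "v j \<ge> 0" for j
    by (meson not_le)
  have "Q > 0"
    using disc zero_le_power2[of P] by linarith
  obtain j where "lucas_U P Q j \<le> 0" "j \<ge> 1"
    using lucas_U_nonpos[OF disc] .
  then have ex: "\<exists>i. lucas_U P Q (Suc i) \<le> 0"
    by (intro exI[of _ "j - 1"]) simp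
  define i where "i = (LEAST i. lucas_U P Q (Suc i) \<le> 0)"
  have Ui: "lucas_U P Q (Suc i) \<le> 0"
    unfolding i_def using ex by (rule LeastI_ex)
  have "i \<noteq> 0"
  proof
    assume "i = 0"
    with Ui show False
      by simp
  qed
  then have "\<not> lucas_U P Q (Suc (i - 1)) \<le> 0"
    unfolding i_def by (intro not_less_Least) simp
  then have "lucas_U P Q i > 0"
    using \<open>i \<noteq> 0\<close> by simp
  have "v (Suc i) = lucas_U P Q (Suc i) * v 1 - Q * lucas_U P Q i * v 0"
    by (rule linear_recurrence_lucas_U[OF rec])
  also have "\<dots> < 0"
    using mult_nonpos_nonneg[OF Ui nonneg[of 1]] \<open>Q > 0\<close> \<open>lucas_U P Q i > 0\<close> \<open>v 0 > 0\<close>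
    by (smt (verit) mult_pos_pos)
  finally show False
    using nonneg[of "Suc i"] by simp
qed

section \<open>Rational approximation of the exponential at 0\<close>

lemma bigo_tendsto_0:
  fixes f g :: "'a \<Rightarrow> real"
  assumes "f \<in> O[F](g)" "(g \<longlongrightarrow> 0) F"
  shows "(f \<longlongrightarrow> 0) F"
proof -
  obtain c where "eventually (\<lambda>x. norm (f x) \<le> c * norm (g x)) F"
    using assms(1) by (elim landau_o.bigE)
  moreover have "((\<lambda>x. c * norm (g x)) \<longlongrightarrow> 0) F"
    using tendsto_mult_right_zero[OF tendsto_norm_zero[OF assms(2)]] .
  ultimately show ?thesis
    by (rule Lim_null_comparison)
qed

lemma coeff_eq_0_if_poly_bigo:
  fixes p :: "real poly"
  assumes "poly p \<in> O[at 0](\<lambda>z. z ^ n)" "i < n"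
  shows "coeff p i = 0"
  using assms
proof (induction n arbitrary: p i)
  case 0
  from \<open>i < 0\<close> show ?case by simp
next
  case (Suc n)
  obtain a q where p: "p = pCons a q"
    by (cases p)
  have "((\<lambda>z::real. z ^ Suc n) \<longlongrightarrow> 0) (at 0)"
    using tendsto_power[OF tendsto_ident_at[of "0::real" UNIV], of "Suc n"] by simp
  with Suc.prems(1) have "(poly p \<longlongrightarrow> 0) (at 0)"
    by (rule bigo_tendsto_0)
  moreover have "(poly p \<longlongrightarrow> poly p 0) (at 0)"
    by (intro tendsto_poly tendsto_ident_at)
  ultimately have "poly p 0 = 0"
    by (rule tendsto_unique[OF at_neq_bot, symmetric])
  then have a: "a = 0"
    using p by simp
  have "poly p = (\<lambda>z. z * poly q z)" "(\<lambda>z::real. z ^ Suc n) = (\<lambda>z. z * z ^ n)"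
    using p a by (simp_all add: fun_eq_iff)
  with Suc.prems(1) have "(\<lambda>z. z * poly q z) \<in> O[at 0](\<lambda>z. z * z ^ n)"
    by (simp only:)
  moreover have "eventually (\<lambda>z::real. z \<noteq> 0) (at 0)"
    by (simp add: eventually_at_filter)
  ultimately have q: "poly q \<in> O[at 0](\<lambda>z. z ^ n)"
    by (subst (asm) landau_o.big.mult_cancel_left) (rule bigtheta_refl)
  show ?case
  proof (cases i)
    case 0
    with p a show ?thesis
      by simp
  next
    case (Suc j)
    with \<open>i < Suc n\<close> have "coeff q j = 0"
      using Suc.IH[OF q] by simp
    with p Suc show ?thesis
      by simp
  qed
qed

lemma exp_minus_taylor3_bigo:
  "(\<lambda>z::real. exp z - (1 + z + z\<^sup>2 / 2 + z ^ 3 / 6)) \<in> O[at 0](\<lambda>z. z ^ 4)"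
  by real_asymp

lemma poly_bigo_1: "poly p \<in> O[at x](\<lambda>_. 1)"
  for p :: "real poly"
proof (rule bigoI_tendsto)
  show "((\<lambda>z. poly p z / 1) \<longlongrightarrow> poly p x) (at x)"
    using tendsto_poly[OF tendsto_ident_at[of x UNIV], of p] by simp
qed simp

lemma eventually_poly_neq_0_at:
  fixes p :: "real poly"
  assumes "p \<noteq> 0"
  shows "eventually (\<lambda>z. poly p z \<noteq> 0) (at x)"
proof -
  have "\<not> x islimpt {z. poly p z = 0}"
    using poly_roots_finite[OF assms] by (rule islimpt_finite)
  then show ?thesis
    unfolding islimpt_iff_eventually by simp
qed

lemma ratfun_minus_exp_bigoI:
  assumes "poly Q 0 \<noteq> 0" "(\<lambda>z. poly P z - poly Q z * exp z) \<in> O[at 0](\<lambda>z. z ^ n)"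
  shows "(\<lambda>z. ratfun P Q z - exp z) \<in> O[at 0](\<lambda>z. z ^ n)"
proof -
  have "((\<lambda>z. inverse (poly Q z) / 1) \<longlongrightarrow> inverse (poly Q 0)) (at 0)"
    using tendsto_inverse[OF tendsto_poly[OF tendsto_ident_at[of 0 UNIV], of Q] assms(1)] by simp
  then have "(\<lambda>z. inverse (poly Q z)) \<in> O[at 0](\<lambda>_. 1)"
    by (rule bigoI_tendsto) simp
  with assms(2) have "(\<lambda>z. (poly P z - poly Q z * exp z) * inverse (poly Q z)) \<in> O[at 0](\<lambda>z. z ^ n)"
    by (rule landau_o.big_1_mult)
  moreover have "eventually (\<lambda>z. poly Q z \<noteq> 0) (at 0)"
    using assms(1) by (intro eventually_poly_neq_0_at) auto
  then have ev: "eventually (\<lambda>z. (poly P z - poly Q z * exp z) * inverse (poly Q z) = ratfun P Q z - exp z) (at 0)"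
    by eventually_elim (simp add: ratfun_eq_divide field_simps)
  ultimately show ?thesis
    using landau_o.big.in_cong[OF ev] by blast
qed

lemma rnum_minus_rden_exp_bigo:
  assumes "Q \<noteq> 0" "(\<lambda>z. ratfun P Q z - exp z) \<in> O[at 0](\<lambda>z. z ^ n)"
  shows "(\<lambda>z. poly (rnum P Q) z - poly (rden P Q) z * exp z) \<in> O[at 0](\<lambda>z. z ^ n)"
proof -
  have "rden P Q \<noteq> 0"
    using assms(1) rden_mult_gcd[of P Q] by auto
  then have "eventually (\<lambda>z. poly (rden P Q) z \<noteq> 0) (at 0)"
    by (rule eventually_poly_neq_0_at)
  then have ev: "eventually (\<lambda>z. (ratfun P Q z - exp z) * poly (rden P Q) z
      = poly (rnum P Q) z - poly (rden P Q) z * exp z) (at 0)"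
    by eventually_elim (simp add: ratfun_def field_simps)
  moreover have "(\<lambda>z. (ratfun P Q z - exp z) * poly (rden P Q) z) \<in> O[at 0](\<lambda>z. z ^ n)"
    using assms(2) poly_bigo_1 by (rule landau_o.big_1_mult)
  ultimately show ?thesis
    using landau_o.big.in_cong[OF ev] by blast
qed

lemma poly_bigo_at_0_iff:
  fixes p :: "real poly"
  shows "poly p \<in> O[at 0](\<lambda>z. z ^ n) \<longleftrightarrow> (\<forall>i<n. coeff p i = 0)"
proof
  show "poly p \<in> O[at 0](\<lambda>z. z ^ n) \<Longrightarrow> \<forall>i<n. coeff p i = 0"
    using coeff_eq_0_if_poly_bigo by blast
  show "\<forall>i<n. coeff p i = 0 \<Longrightarrow> poly p \<in> O[at 0](\<lambda>z. z ^ n)"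
  proof (induction n arbitrary: p)
    case 0
    show ?case
      unfolding power_0 by (rule poly_bigo_1)
  next
    case (Suc n)
    obtain a q where p: "p = pCons a q"
      by (cases p)
    have "a = 0" "\<forall>i<n. coeff q i = 0"
      using Suc.prems p by (metis coeff_pCons_0 zero_less_Suc, metis Suc_mono coeff_pCons_Suc)
    then have "(\<lambda>z. z * poly q z) \<in> O[at 0](\<lambda>z. z * z ^ n)"
      using Suc.IH by (intro landau_o.big.mult_left) blast
    moreover have "poly p = (\<lambda>z. z * poly q z)" "(\<lambda>z::real. z ^ Suc n) = (\<lambda>z. z * z ^ n)"
      using p \<open>a = 0\<close> by (simp_all add: fun_eq_iff)
    ultimately show ?case
      by (simp only:)
  qed
qed

lemma poly_taylor3:
  "poly [:1, 1, 1/2, 1/6:] z = 1 + z + z\<^sup>2 / 2 + z ^ 3 / (6::real)"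
  by (simp add: algebra_simps power2_eq_square power3_eq_cube)

lemma poly_minus_poly_exp_bigo_iff:
  fixes P Q :: "real poly"
  shows "(\<lambda>z. poly P z - poly Q z * exp z) \<in> O[at 0](\<lambda>z. z ^ 4)
    \<longleftrightarrow> (\<forall>i<4. coeff (P - Q * [:1, 1, 1/2, 1/6:]) i = 0)"
proof -
  have rem: "(\<lambda>z. (exp z - poly [:1, 1, 1/2, 1/6:] z) * poly Q z) \<in> O[at 0](\<lambda>z. z ^ 4)"
    using exp_minus_taylor3_bigo poly_bigo_1 unfolding poly_taylor3[symmetric]
    by (rule landau_o.big_1_mult)
  define A where "A z = poly P z - poly Q z * exp z" for z
  have poly_eq: "poly (P - Q * [:1, 1, 1/2, 1/6:])
      = (\<lambda>z. A z + (exp z - poly [:1, 1, 1/2, 1/6:] z) * poly Q z)"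
    unfolding A_def by (simp add: fun_eq_iff algebra_simps)
  have A_eq: "A = (\<lambda>z. poly (P - Q * [:1, 1, 1/2, 1/6:]) z - (exp z - poly [:1, 1, 1/2, 1/6:] z) * poly Q z)"
    unfolding poly_eq by simp
  show ?thesis
    unfolding A_def[symmetric] poly_bigo_at_0_iff[symmetric]
  proof
    assume "A \<in> O[at 0](\<lambda>z. z ^ 4)"
    then show "poly (P - Q * [:1, 1, 1/2, 1/6:]) \<in> O[at 0](\<lambda>z. z ^ 4)"
      unfolding poly_eq using rem by (rule sum_in_bigo)
  next
    assume "poly (P - Q * [:1, 1, 1/2, 1/6:]) \<in> O[at 0](\<lambda>z. z ^ 4)"
    then show "A \<in> O[at 0](\<lambda>z. z ^ 4)"
      unfolding A_eq using rem by (rule sum_in_bigo)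
  qed
qed

section \<open>The family \<open>\<psi>\<^sub>a\<close>\<close>

lemma poly_psi_num: "poly (psi_num a) x = 1 + (a + 1) * x + (1/3 + a/2) * x\<^sup>2"
  by (simp add: psi_num_def algebra_simps power2_eq_square)

lemma poly_psi_den: "poly (psi_den a) x = 1 + a * x - (a/2 + 1/6) * x\<^sup>2"
  by (simp add: psi_den_def algebra_simps power2_eq_square)

lemma psi_den_neq_0: "psi_den a \<noteq> 0"
  by (simp add: psi_den_def)

lemma degree_psi_num: "degree (psi_num a) \<le> 2"
  and degree_psi_den: "degree (psi_den a) \<le> 2"
  by (simp_all add: psi_num_def psi_den_def)

lemma psi_num_or_den_neq_0: "poly (psi_num a) x \<noteq> 0 \<or> poly (psi_den a) x \<noteq> 0"
proof (rule ccontr)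
  assume "\<not> ?thesis"
  then have N: "poly (psi_num a) x = 0" and D: "poly (psi_den a) x = 0"
    by auto
  then have "x \<noteq> 0"
    by (auto simp: poly_psi_den)
  moreover have "x * (1 + (a + 1/2) * x) = 0"
    using N D unfolding poly_psi_num poly_psi_den by (simp add: algebra_simps power2_eq_square)
  ultimately have "1 + (a + 1/2) * x = 0"
    by simp
  then have "a * x = -1 - x / 2"
    by (simp add: algebra_simps)
  have "poly (psi_den a) x = 1 + a * x - (a * x) * x / 2 - x\<^sup>2 / 6"
    unfolding poly_psi_den by (simp add: algebra_simps power2_eq_square)
  also have "\<dots> = x\<^sup>2 / 12"
    unfolding \<open>a * x = -1 - x / 2\<close> by (simp add: field_simps power2_eq_square)
  finally have "poly (psi_den a) x = x\<^sup>2 / 12" .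
  with D \<open>x \<noteq> 0\<close> show False
    by simp
qed

lemma is_pole_psi_iff: "is_pole (psi_num a) (psi_den a) x \<longleftrightarrow> poly (psi_den a) x = 0"
  using psi_num_or_den_neq_0 by (rule is_pole_iff_poly_eq_0)

lemma psi_in_Pi_set: "(psi_num a, psi_den a) \<in> Pi_set 2 2 3"
proof -
  have "\<forall>i<4. coeff (psi_num a - psi_den a * [:1, 1, 1/2, 1/6:]) i = 0"
    by (auto simp: psi_num_def psi_den_def less_Suc_eq numeral_3_eq_3 numeral_2_eq_2 eval_nat_numeral)
  then have "(\<lambda>z. poly (psi_num a) z - poly (psi_den a) z * exp z) \<in> O[at 0](\<lambda>z. z ^ 4)"
    unfolding poly_minus_poly_exp_bigo_iff .
  then have "(\<lambda>z. ratfun (psi_num a) (psi_den a) z - exp z) \<in> O[at 0](\<lambda>z. z ^ (3 + 1))"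
    by (intro ratfun_minus_exp_bigoI) (simp_all add: psi_den_def)
  then show ?thesis
    unfolding Pi_set_def using degree_psi_num degree_psi_den psi_den_neq_0 by blast
qed

lemma degree_2_poly_eq:
  assumes "degree p \<le> 2"
  shows "p = [:coeff p 0, coeff p 1, coeff p 2:]"
  by (rule poly_eqI) (use assms in \<open>simp add: coeff_pCons numeral_2_eq_2 coeff_eq_0 split: nat.split\<close>)

lemma taylor3_coeffs_eq_0_imp_psi:
  fixes r0 r1 r2 s0 s1 s2 :: real
  assumes "\<forall>i<4. coeff ([:r0, r1, r2:] - [:s0, s1, s2:] * [:1, 1, 1/2, 1/6:]) i = 0" "s0 \<noteq> 0"
  shows "[:r0, r1, r2:] = smult s0 (psi_num (s1 / s0))"
    and "[:s0, s1, s2:] = smult s0 (psi_den (s1 / s0))"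
proof -
  have "coeff ([:r0, r1, r2:] - [:s0, s1, s2:] * [:1, 1, 1/2, 1/6:]) i = 0" if "i < 4" for i
    using assms(1) that by blast
  from this[of 0] this[of 1] this[of 2] this[of 3]
  have coeffs: "r0 = s0" "r1 = s0 + s1" "r2 = s0 / 2 + s1 + s2" "s2 = - s0 / 6 - s1 / 2"
    by (simp_all add: numeral_3_eq_3 numeral_2_eq_2 algebra_simps)
  show "[:r0, r1, r2:] = smult s0 (psi_num (s1 / s0))"
    unfolding coeffs psi_num_def using assms(2) by (simp add: distrib_left)
  show "[:s0, s1, s2:] = smult s0 (psi_den (s1 / s0))"
    unfolding coeffs psi_den_def using assms(2) by (simp add: distrib_left) (simp add: field_simps)
qed

lemma Pi_set_223_eq_psi:
  assumes "(P, Q) \<in> Pi_set 2 2 3"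
  obtains a where "P * psi_den a = psi_num a * Q"
proof -
  have Q: "Q \<noteq> 0" and "degree P \<le> 2" "degree Q \<le> 2"
    and bigo: "(\<lambda>z. ratfun P Q z - exp z) \<in> O[at 0](\<lambda>z. z ^ 4)"
    using assms unfolding Pi_set_def by auto
  define r s where "r = rnum P Q" and "s = rden P Q"
  define r0 r1 r2 s0 s1 s2
    where "r0 = coeff r 0" "r1 = coeff r 1" "r2 = coeff r 2" "s0 = coeff s 0" "s1 = coeff s 1" "s2 = coeff s 2"
  have "degree r \<le> 2" "degree s \<le> 2"
    using \<open>degree P \<le> 2\<close> \<open>degree Q \<le> 2\<close> degree_rnum_le[of P Q] degree_rden_le[of P Q]
    unfolding r_def s_def by linarith+
  then have rs: "r = [:r0, r1, r2:]" "s = [:s0, s1, s2:]"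
    unfolding r0_r1_r2_s0_s1_s2_def by (simp_all only: degree_2_poly_eq[symmetric])
  have coeffs: "\<forall>i<4. coeff ([:r0, r1, r2:] - [:s0, s1, s2:] * [:1, 1, 1/2, 1/6:]) i = 0"
    using rnum_minus_rden_exp_bigo[OF Q bigo]
    unfolding poly_minus_poly_exp_bigo_iff r_def[symmetric] s_def[symmetric] rs .
  have "r0 = s0"
    using coeffs[rule_format, of 0] by simp
  have "s0 \<noteq> 0"
  proof
    assume "s0 = 0"
    with \<open>r0 = s0\<close> have "poly r 0 = 0" "poly s 0 = 0"
      unfolding rs by simp_all
    then have "[:0, 1:] dvd r" "[:0, 1:] dvd s"
      by (simp_all add: dvd_iff_poly_eq_0)
    with coprime_rnum_rden[OF Q, of P] have "is_unit [:0, 1::real:]"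
      unfolding r_def s_def by (rule coprime_common_divisor)
    then show False
      by (simp add: is_unit_pCons_iff)
  qed
  define a where "a = s1 / s0"
  note r_s = taylor3_coeffs_eq_0_imp_psi[OF coeffs \<open>s0 \<noteq> 0\<close>, folded rs a_def]
  have "P * psi_den a = r * gcd P Q * psi_den a"
    unfolding r_def rnum_mult_gcd ..
  also have "\<dots> = psi_num a * (s * gcd P Q)"
    unfolding r_s by (simp add: ac_simps)
  also have "\<dots> = psi_num a * Q"
    unfolding s_def rden_mult_gcd ..
  finally show ?thesis
    by (rule that)
qed

section \<open>Parameters with radius below \<open>1 + \<surd>3\<close>\<close>

lemma sqrt_3_bounds: "173/100 < sqrt (3::real)" "sqrt (3::real) < 7/4"
proof -
  have "(173/100::real) = sqrt ((173/100)\<^sup>2)"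
    by simp
  also have "\<dots> < sqrt 3"
    by (intro real_sqrt_less_mono) (simp add: power2_eq_square)
  finally show "173/100 < sqrt (3::real)" .
  show "sqrt 3 < (7/4::real)"
    by (rule real_less_lsqrt) (auto simp: power2_eq_square)
qed

lemma poly_psi_num_at_neg_R: "poly (psi_num a) (- (1 + sqrt 3)) = (4 - sqrt 3) / 3 + a"
proof -
  have "poly (psi_num a) (- (1 + sqrt 3)) = 1 - (a + 1) * (1 + sqrt 3) + (1/3 + a/2) * (4 + 2 * sqrt 3)"
    unfolding poly_psi_num by (simp add: power2_eq_square algebra_simps)
  also have "\<dots> = (4 - sqrt 3) / 3 + a"
    by (simp add: algebra_simps diff_divide_distrib add_divide_distrib)
  finally show ?thesis .
qed

lemma poly_psi_den_at_neg_R: "poly (psi_den a) (- (1 + sqrt 3)) = (1 - sqrt 3) / 3 - (3 + 2 * sqrt 3) * a"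
proof -
  have "poly (psi_den a) (- (1 + sqrt 3)) = 1 - a * (1 + sqrt 3) - (a/2 + 1/6) * (4 + 2 * sqrt 3)"
    unfolding poly_psi_den by (simp add: power2_eq_square algebra_simps)
  also have "\<dots> = (1 - sqrt 3) / 3 - (3 + 2 * sqrt 3) * a"
    by (simp add: algebra_simps)
  finally show ?thesis .
qed

lemma radius_am_psi_less_if_num_neg:
  assumes "a < -1"
  shows "radius_am (psi_num a) (psi_den a) < ereal (1 + sqrt 3)"
proof (rule radius_am_less_at_right)
  let ?R = "1 + sqrt 3"
  show "?R > 0"
    by (simp add: add_pos_nonneg)
  have "(3 + 2 * sqrt 3) * a < (3 + 2 * sqrt 3) * (-1)"
    using assms by (intro mult_strict_left_mono) (auto simp: add_pos_nonneg)
  then have "poly (psi_den a) (- ?R) > 0"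
    using sqrt_3_bounds unfolding poly_psi_den_at_neg_R by simp
  moreover have "poly (psi_num a) (- ?R) < 0"
    using assms sqrt_3_bounds unfolding poly_psi_num_at_neg_R by (simp add: diff_divide_distrib)
  moreover have "(poly p \<longlongrightarrow> poly p (- ?R)) (at_right (- ?R))" for p
    by (intro tendsto_poly tendsto_ident_at)
  ultimately have "eventually (\<lambda>x. poly (psi_num a) x < 0) (at_right (- ?R))"
    "eventually (\<lambda>x. poly (psi_den a) x > 0) (at_right (- ?R))"
    by (auto intro: order_tendstoD)
  then show "eventually (\<lambda>x. \<not> abs_monotonic_at (psi_num a) (psi_den a) x) (at_right (- ?R))"
  proof eventually_elim
    case (elim x)
    then have "(deriv ^^ 0) (ratfun (psi_num a) (psi_den a)) x < 0"
      by (simp add: ratfun_eq_divide divide_neg_pos)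
    then show ?case
      by (rule not_abs_monotonic_atI)
  qed
qed

lemma radius_am_psi_less_if_pole:
  assumes "poly (psi_den a) (- (1 + sqrt 3)) < 0"
  shows "radius_am (psi_num a) (psi_den a) < ereal (1 + sqrt 3)"
proof -
  have "poly (psi_den a) (- (1 + sqrt 3)) * poly (psi_den a) 0 < 0"
    using assms by (simp add: poly_psi_den)
  then have "\<exists>x > - (1 + sqrt 3). x < 0 \<and> poly (psi_den a) x = 0"
    using sqrt_3_bounds by (intro poly_IVT) auto
  then obtain x where x: "- (1 + sqrt 3) < x" "x < 0" "poly (psi_den a) x = 0"
    by blast
  then have "\<not> abs_monotonic_at (psi_num a) (psi_den a) x"
    unfolding abs_monotonic_at_def is_pole_psi_iff by simp
  with x show ?thesis
    by (intro radius_am_less) auto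
qed

lemma poly_ratfun_deriv_num_psi:
  "poly (ratfun_deriv_num (psi_num a) (psi_den a) 1) x = 1 + (2 * a + 1) * x + (a\<^sup>2 + a + 1/6) * x\<^sup>2"
  unfolding ratfun_deriv_num_1
  by (simp add: psi_num_def psi_den_def pderiv_pCons algebra_simps power2_eq_square add_divide_distrib diff_divide_distrib)

lemma radius_am_psi_less_if_taylor_coeff_neg:
  assumes "-1 \<le> a" "a < -1 + 1 / sqrt 3"
  shows "radius_am (psi_num a) (psi_den a) < ereal (1 + sqrt 3)"
proof -
  define q where "q = - a/2 - 1/6"
  define c where "c k = (deriv ^^ k) (ratfun (psi_num a) (psi_den a)) 0 / fact k" for k
  define v where "v j = c (j + 1)" for j
  have "poly (psi_den a) 0 * c (j + 3) + poly (pderiv (psi_den a)) 0 * c (j + 2)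
      + coeff (psi_den a) 2 * c (j + 1) = 0" for j
    unfolding c_def
    by (rule ratfun_taylor_coeff_recurrence[OF degree_psi_num degree_psi_den]) (simp add: psi_den_def)
  then have "v (j + 2) = (- a) * v (j + 1) - q * v j" for j
    unfolding v_def q_def by (simp add: psi_den_def pderiv_pCons numeral_3_eq_3 numeral_2_eq_2 algebra_simps)
  moreover have "(- a)\<^sup>2 < 4 * q"
  proof -
    have "(a + 1)\<^sup>2 < (1 / sqrt 3)\<^sup>2"
      using assms by (intro power_strict_mono) auto
    then show ?thesis
      unfolding q_def by (simp add: power2_eq_square algebra_simps)
  qed
  moreover have "(deriv ^^ 1) (ratfun (psi_num a) (psi_den a)) 0 = 1"
    using higher_deriv_ratfun[of "psi_den a" 0 1 "psi_num a"]
    unfolding poly_ratfun_deriv_num_psi by (simp add: poly_psi_den)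
  then have "v 0 > 0"
    unfolding v_def c_def by simp
  ultimately obtain j where "v j < 0"
    by (rule linear_recurrence_neg)
  moreover have "(deriv ^^ (j + 1)) (ratfun (psi_num a) (psi_den a)) 0 = v j * fact (j + 1)"
    unfolding v_def c_def by simp
  ultimately have "(deriv ^^ (j + 1)) (ratfun (psi_num a) (psi_den a)) 0 < 0"
    by (simp add: mult_neg_pos)
  then have "\<not> abs_monotonic_at (psi_num a) (psi_den a) 0"
    by (rule not_abs_monotonic_atI)
  then show ?thesis
    using sqrt_3_bounds by (intro radius_am_less) auto
qed

lemma psi_den_pos_if_den_at_neg_R_nonneg:
  assumes "-1 + 1 / sqrt 3 < a" "poly (psi_den a) (- (1 + sqrt 3)) \<ge> 0"
    and "- (1 + sqrt 3) < x" "x \<le> 0"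
  shows "poly (psi_den a) x > 0"
proof (cases "a < -1/3")
  case True
  have "1 / sqrt 3 < (1::real)"
    using sqrt_3_bounds by simp
  with assms(1) True have "a * x \<ge> 0"
    using assms(4) by (intro mult_nonpos_nonpos) auto
  moreover have "(a/2 + 1/6) * x\<^sup>2 \<le> 0"
    using True by (intro mult_nonpos_nonneg) auto
  ultimately show ?thesis
    unfolding poly_psi_den by linarith
next
  case False
  define R where "R = 1 + sqrt 3"
  have R: "R > 0"
    unfolding R_def by (simp add: add_pos_nonneg)
  \<comment> \<open>interpolation of the quadratic between its values at \<open>-R\<close> and \<open>0\<close>\<close>
  have "R * poly (psi_den a) x = - x * poly (psi_den a) (- R) + (x + R)
      - (a/2 + 1/6) * R * (x * (x + R))"
    unfolding poly_psi_den by (simp add: algebra_simps power2_eq_square)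
  moreover have "- x * poly (psi_den a) (- R) \<ge> 0"
    using assms unfolding R_def by (intro mult_nonneg_nonneg) auto
  moreover have "x + R > 0"
    using assms unfolding R_def by simp
  moreover have "(a/2 + 1/6) * R * (x * (x + R)) \<le> 0"
    using False R assms(4) \<open>x + R > 0\<close>
    by (intro mult_nonneg_nonpos mult_nonneg_nonneg mult_nonpos_nonneg) auto
  ultimately have "R * poly (psi_den a) x > 0"
    by linarith
  with R show ?thesis
    by (simp add: zero_less_mult_iff)
qed

lemma psi_deriv_num_at_neg_R_neg:
  assumes "-1 + 1 / sqrt 3 < a" "poly (psi_den a) (- (1 + sqrt 3)) \<ge> 0"
  shows "poly (ratfun_deriv_num (psi_num a) (psi_den a) 1) (- (1 + sqrt 3)) < 0"
proof -
  define s where "s = sqrt (3::real)"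
  have ss: "s * s = 3" and s: "173/100 < s" "s < 7/4"
    unfolding s_def using sqrt_3_bounds by simp_all
  have "(3 + 2 * s) * a \<le> (1 - s) / 3"
    using assms(2) unfolding poly_psi_den_at_neg_R s_def by simp
  also have "\<dots> < 0"
    using s by simp
  finally have "a < 0"
    using s by (simp add: mult_less_0_iff)
  have "1 / s = s / 3"
    using ss s by (simp add: field_simps)
  then have "3 * a + 3 - s > 0"
    using assms(1) unfolding s_def[symmetric] by simp
  moreover have "3 * a - 2 * s + 3 < 0"
    using \<open>a < 0\<close> s by simp
  ultimately have "(4 + 2 * s) * (3 * a + 3 - s) * (3 * a - 2 * s + 3) < 0"
    using s by (simp add: mult_pos_neg)
  moreover have "9 * poly (ratfun_deriv_num (psi_num a) (psi_den a) 1) (- (1 + s))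
      = (4 + 2 * s) * (3 * a + 3 - s) * (3 * a - 2 * s + 3)"
    unfolding poly_ratfun_deriv_num_psi by (simp add: algebra_simps power2_eq_square ss)
  ultimately show ?thesis
    unfolding s_def by simp
qed

lemma radius_am_psi_less_if_deriv_neg:
  assumes "-1 + 1 / sqrt 3 < a" "poly (psi_den a) (- (1 + sqrt 3)) \<ge> 0"
  shows "radius_am (psi_num a) (psi_den a) < ereal (1 + sqrt 3)"
proof (rule radius_am_less_at_right)
  let ?R = "1 + sqrt 3" and ?W = "poly (ratfun_deriv_num (psi_num a) (psi_den a) 1)"
  show "?R > 0"
    by (simp add: add_pos_nonneg)
  have "(?W \<longlongrightarrow> ?W (- ?R)) (at_right (- ?R))"
    by (intro tendsto_poly tendsto_ident_at)
  then have "eventually (\<lambda>x. ?W x < 0) (at_right (- ?R))"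
    using psi_deriv_num_at_neg_R_neg[OF assms] by (rule order_tendstoD)
  moreover have "eventually (\<lambda>x. x < 0) (at_right (- ?R))"
    using sqrt_3_bounds by (intro order_tendstoD(2)[OF tendsto_ident_at]) simp
  ultimately show "eventually (\<lambda>x. \<not> abs_monotonic_at (psi_num a) (psi_den a) x) (at_right (- ?R))"
    using eventually_at_right_less
  proof eventually_elim
    case (elim x)
    then have "poly (psi_den a) x > 0"
      using psi_den_pos_if_den_at_neg_R_nonneg[OF assms] by simp
    with elim have "(deriv ^^ 1) (ratfun (psi_num a) (psi_den a)) x < 0"
      using higher_deriv_ratfun[of "psi_den a" x 1 "psi_num a"] by (simp add: divide_neg_pos)
    then show ?case
      by (rule not_abs_monotonic_atI)
  qed
qed

section \<open>The optimal parameter\<close>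

lemma psi_opt_num_den:
  defines "s \<equiv> sqrt 3" and "a \<equiv> -1 + 1 / sqrt 3"
  shows "(12 + 6 * s) * poly (psi_den a) z = (3 + s - z)\<^sup>2"
    and "(12 + 6 * s) * poly (psi_num a) z
      = (1 + s) * (3 + s - z)\<^sup>2 - (12 * s + 18) * (3 + s - z) + (72 + 42 * s)"
    and "poly (psi_num a) z > 0"
proof -
  have ss: "s * s = 3" "s * (s * x) = 3 * x" and s: "173/100 < s" "s < 7/4" for x
    unfolding s_def using sqrt_3_bounds by (simp_all add: mult.assoc[symmetric])
  have "1 / s = s / 3"
    using ss s by (simp add: field_simps)
  then have a: "a = (s - 3) / 3"
    unfolding a_def s_def[symmetric] by (simp add: diff_divide_distrib)
  show "(12 + 6 * s) * poly (psi_den a) z = (3 + s - z)\<^sup>2"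
    unfolding poly_psi_den a by (simp add: algebra_simps power2_eq_square ss add_divide_distrib diff_divide_distrib)
  show "(12 + 6 * s) * poly (psi_num a) z
      = (1 + s) * (3 + s - z)\<^sup>2 - (12 * s + 18) * (3 + s - z) + (72 + 42 * s)"
    unfolding poly_psi_num a by (simp add: algebra_simps power2_eq_square ss add_divide_distrib diff_divide_distrib)
  \<comment> \<open>completing the square\<close>
  have "24 * (s - 1) * poly (psi_num a) z = (2 * (s - 1) * z + 2 * s)\<^sup>2 + (24 * s - 36)"
    unfolding poly_psi_num a by (simp add: algebra_simps power2_eq_square ss add_divide_distrib diff_divide_distrib)
  moreover have "(2 * (s - 1) * z + 2 * s)\<^sup>2 + (24 * s - 36) > 0"
    using s by (simp add: add_nonneg_pos)
  ultimately have "0 < 24 * (s - 1) * poly (psi_num a) z"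
    by (simp only:)
  moreover have "0 < 24 * (s - 1)"
    using s by simp
  ultimately show "poly (psi_num a) z > 0"
    by (rule zero_less_mult_pos)
qed

lemma higher_deriv_psi_opt:
  defines "s \<equiv> sqrt 3" and "a \<equiv> -1 + 1 / sqrt 3"
  assumes "z < 3 + s"
  shows "poly (psi_den a) z > 0"
    and "(deriv ^^ Suc k) (ratfun (psi_num a) (psi_den a)) z
      = fact (Suc k) * ((72 + 42 * s) * (k + 2) - (12 * s + 18) * (3 + s - z)) / (3 + s - z) ^ (k + 3)"
proof -
  have "s > 0"
    unfolding s_def by simp
  have den: "(12 + 6 * s) * poly (psi_den a) y = (3 + s - y)\<^sup>2" for y
    using psi_opt_num_den(1) unfolding s_def a_def .
  have den_pos: "poly (psi_den a) y > 0" if "y < 3 + s" for y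
  proof (rule zero_less_mult_pos)
    show "0 < (12 + 6 * s) * poly (psi_den a) y"
      unfolding den using that by simp
  qed (use \<open>s > 0\<close> in simp)
  then show "poly (psi_den a) z > 0"
    using assms(3) .
  have partial_fractions: "ratfun (psi_num a) (psi_den a) y
      = (1 + s) + (- (12 * s + 18)) / (3 + s - y) + (72 + 42 * s) / (3 + s - y)\<^sup>2" if "y < 3 + s" for y
  proof -
    have "ratfun (psi_num a) (psi_den a) y
        = ((12 + 6 * s) * poly (psi_num a) y) / ((12 + 6 * s) * poly (psi_den a) y)"
      using den_pos[OF that] \<open>s > 0\<close> by (simp add: ratfun_eq_divide)
    also have "\<dots> = ((1 + s) * (3 + s - y)\<^sup>2 + (- (12 * s + 18)) * (3 + s - y) + (72 + 42 * s)) / (3 + s - y)\<^sup>2"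
      unfolding den psi_opt_num_den(2)[of y, folded s_def a_def] by (simp add: algebra_simps)
    also have "\<dots> = (1 + s) + (- (12 * s + 18)) / (3 + s - y) + (72 + 42 * s) / (3 + s - y)\<^sup>2"
      using that by (simp add: add_divide_distrib power2_eq_square)
    finally show ?thesis .
  qed
  have "(deriv ^^ Suc k) (ratfun (psi_num a) (psi_den a)) z
      = fact (Suc k) * (- (12 * s + 18) * (3 + s - z) + (72 + 42 * s) * (k + 2)) / (3 + s - z) ^ (k + 3)"
    using assms(3) partial_fractions by (rule higher_deriv_partial_fractions)
  then show "(deriv ^^ Suc k) (ratfun (psi_num a) (psi_den a)) z
      = fact (Suc k) * ((72 + 42 * s) * (k + 2) - (12 * s + 18) * (3 + s - z)) / (3 + s - z) ^ (k + 3)"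
    by (simp add: algebra_simps)
qed

text \<open>The numerators of the derivatives in \<open>higher_deriv_psi_opt\<close> are smallest for \<open>k = 0\<close>,
  and there they vanish exactly at \<open>z = -(1 + \<surd>3)\<close>:\<close>
lemma psi_opt_balance: "(12 * sqrt 3 + 18) * (4 + 2 * sqrt 3) = (72 + 42 * sqrt 3) * (2::real)"
  by (simp add: algebra_simps)

lemma abs_monotonic_at_psi_opt:
  assumes "- (1 + sqrt 3) \<le> x" "x \<le> 0"
  shows "abs_monotonic_at (psi_num (-1 + 1 / sqrt 3)) (psi_den (-1 + 1 / sqrt 3)) x"
proof -
  define s where "s = sqrt (3::real)"
  have s: "173/100 < s" "s < 7/4"
    unfolding s_def using sqrt_3_bounds by simp_all
  have x: "x < 3 + s" "3 + s - x \<le> 4 + 2 * s"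
    using assms s unfolding s_def by simp_all
  have den_pos: "poly (psi_den (-1 + 1 / sqrt 3)) x > 0"
    using x(1) unfolding s_def by (rule higher_deriv_psi_opt(1))
  have deriv: "(deriv ^^ Suc k) (ratfun (psi_num (-1 + 1 / sqrt 3)) (psi_den (-1 + 1 / sqrt 3))) x
      = fact (Suc k) * ((72 + 42 * s) * (k + 2) - (12 * s + 18) * (3 + s - x)) / (3 + s - x) ^ (k + 3)"
    for k
    using x(1) unfolding s_def by (rule higher_deriv_psi_opt(2))
  have "(deriv ^^ k) (ratfun (psi_num (-1 + 1 / sqrt 3)) (psi_den (-1 + 1 / sqrt 3))) x \<ge> 0" for k
  proof (cases k)
    case 0
    then show ?thesis
      using den_pos psi_opt_num_den(3)[of x] by (simp add: ratfun_eq_divide)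
  next
    case (Suc j)
    have "(12 * s + 18) * (3 + s - x) \<le> (12 * s + 18) * (4 + 2 * s)"
      using x s by (intro mult_left_mono) auto
    also have "\<dots> \<le> (72 + 42 * s) * (j + 2)"
      unfolding s_def psi_opt_balance using s unfolding s_def by (intro mult_left_mono) auto
    finally have "(12 * s + 18) * (3 + s - x) \<le> (72 + 42 * s) * (j + 2)" .
    then show ?thesis
      unfolding Suc deriv using x(1) by (intro divide_nonneg_pos mult_nonneg_nonneg) auto
  qed
  moreover have "\<not> is_pole (psi_num (-1 + 1 / sqrt 3)) (psi_den (-1 + 1 / sqrt 3)) x"
    unfolding is_pole_psi_iff using den_pos by simp
  ultimately show ?thesis
    unfolding abs_monotonic_at_def by simp
qed

lemma not_abs_monotonic_at_psi_opt:
  assumes "x < - (1 + sqrt 3)"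
  shows "\<not> abs_monotonic_at (psi_num (-1 + 1 / sqrt 3)) (psi_den (-1 + 1 / sqrt 3)) x"
proof (rule not_abs_monotonic_atI)
  define s where "s = sqrt (3::real)"
  have s: "173/100 < s" "s < 7/4"
    unfolding s_def using sqrt_3_bounds by simp_all
  have x: "x < 3 + s" "3 + s - x > 4 + 2 * s"
    using assms s unfolding s_def by simp_all
  have deriv: "(deriv ^^ Suc 0) (ratfun (psi_num (-1 + 1 / sqrt 3)) (psi_den (-1 + 1 / sqrt 3))) x
      = ((72 + 42 * s) * 2 - (12 * s + 18) * (3 + s - x)) / (3 + s - x) ^ 3"
    using higher_deriv_psi_opt(2)[of x 0] x(1) unfolding s_def by simp
  have "(72 + 42 * s) * 2 < (12 * s + 18) * (3 + s - x)"
    unfolding s_def psi_opt_balance[symmetric] using x s unfolding s_def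
    by (intro mult_strict_left_mono) auto
  then show "(deriv ^^ Suc 0) (ratfun (psi_num (-1 + 1 / sqrt 3)) (psi_den (-1 + 1 / sqrt 3))) x < 0"
    unfolding deriv using x by (simp add: divide_neg_pos)
qed

theorem radius_am_psi_opt:
  "radius_am (psi_num (-1 + 1 / sqrt 3)) (psi_den (-1 + 1 / sqrt 3)) = ereal (1 + sqrt 3)"
  by (intro radius_am_eqI abs_monotonic_at_psi_opt not_abs_monotonic_at_psi_opt) simp_all

lemma radius_am_psi_less:
  assumes "a \<noteq> -1 + 1 / sqrt 3"
  shows "radius_am (psi_num a) (psi_den a) < ereal (1 + sqrt 3)"
proof -
  consider "a < -1" | "-1 \<le> a" "a < -1 + 1 / sqrt 3"
    | "-1 + 1 / sqrt 3 < a" "poly (psi_den a) (- (1 + sqrt 3)) \<ge> 0"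
    | "poly (psi_den a) (- (1 + sqrt 3)) < 0"
    using assms by linarith
  then show ?thesis
    by cases (simp_all add: radius_am_psi_less_if_num_neg radius_am_psi_less_if_taylor_coeff_neg
        radius_am_psi_less_if_deriv_neg radius_am_psi_less_if_pole)
qed

theorem mainTheorem13:
  shows "R_opt 2 2 3 = ereal (1 + sqrt 3)
    \<and> (\<forall>P Q. (P, Q) \<in> Pi_set 2 2 3 \<longrightarrow> (\<exists>a::real. P * psi_den a = psi_num a * Q))
    \<and> radius_am (psi_num (-1 + 1 / sqrt 3)) (psi_den (-1 + 1 / sqrt 3)) = ereal (1 + sqrt 3)
    \<and> (\<forall>a::real. a \<noteq> -1 + 1 / sqrt 3 \<longrightarrow> radius_am (psi_num a) (psi_den a) < ereal (1 + sqrt 3))"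
proof -
  have radius_le: "radius_am P Q \<le> ereal (1 + sqrt 3)" if PQ: "(P, Q) \<in> Pi_set 2 2 3" for P Q
  proof -
    obtain a where "P * psi_den a = psi_num a * Q"
      using PQ by (rule Pi_set_223_eq_psi)
    with PQ have "radius_am P Q = radius_am (psi_num a) (psi_den a)"
      unfolding Pi_set_def by (intro radius_am_cong psi_den_neq_0) auto
    also have "\<dots> \<le> ereal (1 + sqrt 3)"
      using radius_am_psi_opt radius_am_psi_less[of a] by (cases "a = -1 + 1 / sqrt 3") auto
    finally show ?thesis .
  qed
  have "R_opt 2 2 3 = ereal (1 + sqrt 3)"
    unfolding R_opt_def
  proof (rule antisym)
    show "Sup ((\<lambda>(P, Q). radius_am P Q) ` Pi_set 2 2 3) \<le> ereal (1 + sqrt 3)"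
      using radius_le by (auto intro: Sup_least)
    show "ereal (1 + sqrt 3) \<le> Sup ((\<lambda>(P, Q). radius_am P Q) ` Pi_set 2 2 3)"
      using psi_in_Pi_set radius_am_psi_opt by (metis (no_types, lifting) SUP_upper case_prod_conv)
  qed
  with Pi_set_223_eq_psi radius_am_psi_opt radius_am_psi_less show ?thesis
    by metis
qed

end
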